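(* Let $G=(S,C,H)$ be a thin spider graph with weight $r\ge2$ and $T_H$ an MDNS of $G[H]$. Then: (1) $\tilde\gamma_{gr}^{\times 2}((S_f,C,H))=\tilde\gamma_{gr}^{\times 2}(G)+1=2r+1+\tilde\gamma_{gr}^{\times 2}(G[H])$ and $T_H\oplus(c_1,\dots,c_r,s_1,\dots,s_r,s'_r)$ is an MDNS of $(S_f,C,H)$; (2) if $H=\emptyset$ or $a(G[H])=1$, then $\tilde\gamma_{gr}^{\times 2}((S_t,C,H))=\tilde\gamma_{gr}^{\times 2}(G)+1=2r+1+\tilde\gamma_{gr}^{\times 2}(G[H])$ and $T_H\oplus(s_r,s'_r,c_r,c_1,\dots,c_{r-1},s_1,\dots,s_{r-1})$ is an MDNS of $(S_t,C,H)$; (3) if $H\neq\emptyset$ and $a(G[H])=0$, then $\tilde\gamma_{gr}^{\times 2}((S_t,C,H))=2r+\tilde\gamma_{gr}^{\times 2}(G[H])$ and $T_H\oplus(c_1,\dots,c_r,s_1,\dots,s_r)$ is an MDNS of $(S_t,C,H)$; (4) if $H=\emptyset$, then $\tilde\gamma_{gr}^{\times 2}((S,C_f,H))=\tilde\gamma_{gr}^{\times 2}((S,C_t,H))=\tilde\gamma_{gr}^{\times 2}(G)+1=2r+1$ and $(s_r,c_r,c'_r,c_1,\dots,c_{r-1},s_1,\dots,s_{r-1})$ is an MDNS of both $(S,C_f,H)$ and $(S,C_t,H)$; (5) if $H\neq\emptyset$, then $\tilde\gamma_{gr}^{\times 2}((S,C_f,H))=\tilde\gamma_{gr}^{\times 2}((S,C_t,H))=2r+\tilde\gamma_{gr}^{\times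 2}(G[H])$ and $T_H\oplus(c_1,\dots,c_r,s_1,\dots,s_r)$ is an MDNS of both.
   Context: Graphs are finite, simple, undirected; $N(v)$ open, $N[v]$ closed neighborhood. A sequence of distinct vertices $(v_1,\dots,v_k)$ is a double neighborhood sequence (DNS) if for each $i$ some $u\in N[v_i]$ satisfies $|\{j<i:u\in N[v_j]\}|\le 1$; an MDNS is a DNS of maximum length and $\tilde\gamma_{gr}^{\times 2}$ is that length; for the empty graph it is $0$ with the empty sequence. $\oplus$ is concatenation. $a(X)=1$ if $X$ has an isolated vertex, else $0$. A spider graph $G=(S,C,H)$: $V(G)$ is partitioned into $S=\{s_1,\dots,s_r\}$ (stable), $C=\{c_1,\dots,c_r\}$ (clique), $H$ (possibly empty), $r\ge 2$, all edges between $C$ and $H$, none between $H$ and $S$; thin means $s_ic_j\in E$ iff $i=j$. Quasi-spider graphs: $(S_f,C,H)$ (resp. $(S_t,C,H)$) is obtained from $G$ by adding a new vertex $s'_r$ that is a false twin of $s_r$, i.e. $N(s'_r)=N(s_r)$ (resp. a true twin, i.e. $N[s'_r]=N[s_r]\cup\{s'_r\}$ with $s'_r$ adjacent to $s_r$); $(S,C_f,H)$ and $(S,C_t,H)$ are obtained analogously by adding a false (resp. true) twin $c'_r$ of $c_r$. *)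

theory Defs
  imports Main
begin

definition simple_graph :: "'a set \<Rightarrow> ('a \<Rightarrow> 'a \<Rightarrow> bool) \<Rightarrow> bool" where
  "simple_graph V E \<longleftrightarrow> finite V \<and> (\<forall>u v. E u v \<longrightarrow> E v u) \<and> (\<forall>v. \<not> E v v)
     \<and> (\<forall>u v. E u v \<longrightarrow> u \<in> V \<and> v \<in> V)"

(* closed neighbourhood in the graph (V,E); for an induced subgraph G[H] use (H,E) *)
definition cnb :: "'a set \<Rightarrow> ('a \<Rightarrow> 'a \<Rightarrow> bool) \<Rightarrow> 'a \<Rightarrow> 'a set" where
  "cnb V E v = {u \<in> V. u = v \<or> E v u}"

definition is_DNS :: "'a set \<Rightarrow> ('a \<Rightarrow> 'a \<Rightarrow> bool) \<Rightarrow> 'a list \<Rightarrow> bool" where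
  "is_DNS V E xs \<longleftrightarrow> distinct xs \<and> set xs \<subseteq> V \<and>
     (\<forall>i < length xs. \<exists>u \<in> cnb V E (xs ! i).
         card {j. j < i \<and> u \<in> cnb V E (xs ! j)} \<le> 1)"

definition is_MDNS :: "'a set \<Rightarrow> ('a \<Rightarrow> 'a \<Rightarrow> bool) \<Rightarrow> 'a list \<Rightarrow> bool" where
  "is_MDNS V E xs \<longleftrightarrow> is_DNS V E xs \<and> (\<forall>ys. is_DNS V E ys \<longrightarrow> length ys \<le> length xs)"

definition dns_num :: "'a set \<Rightarrow> ('a \<Rightarrow> 'a \<Rightarrow> bool) \<Rightarrow> nat" where
  "dns_num V E = Max (length ` {xs. is_DNS V E xs})"

definition a_iso :: "'a set \<Rightarrow> ('a \<Rightarrow> 'a \<Rightarrow> bool) \<Rightarrow> nat" where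
  "a_iso V E = (if \<exists>v \<in> V. \<forall>u \<in> V. \<not> E v u then 1 else 0)"

(* thin spider graph (S,C,H) with S = s`{1..r}, C = c`{1..r}, vertex set V *)
definition thin_spider ::
  "'a set \<Rightarrow> ('a \<Rightarrow> 'a \<Rightarrow> bool) \<Rightarrow> nat \<Rightarrow> (nat \<Rightarrow> 'a) \<Rightarrow> (nat \<Rightarrow> 'a) \<Rightarrow> 'a set \<Rightarrow> bool" where
  "thin_spider V E r s c H \<longleftrightarrow> simple_graph V E \<and> r \<ge> 2 \<and>
     inj_on s {1..r} \<and> inj_on c {1..r} \<and>
     s ` {1..r} \<inter> c ` {1..r} = {} \<and> s ` {1..r} \<inter> H = {} \<and> c ` {1..r} \<inter> H = {} \<and>
     V = s ` {1..r} \<union> c ` {1..r} \<union> H \<and>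
     (\<forall>i \<in> {1..r}. \<forall>j \<in> {1..r}. \<not> E (s i) (s j)) \<and>
     (\<forall>i \<in> {1..r}. \<forall>j \<in> {1..r}. i \<noteq> j \<longrightarrow> E (c i) (c j)) \<and>
     (\<forall>i \<in> {1..r}. \<forall>j \<in> {1..r}. E (s i) (c j) \<longleftrightarrow> i = j) \<and>
     (\<forall>i \<in> {1..r}. \<forall>h \<in> H. E (c i) h) \<and>
     (\<forall>i \<in> {1..r}. \<forall>h \<in> H. \<not> E (s i) h)"

(* add a new vertex x as a false twin of v: N(x) = N(v) *)
definition add_false_twin :: "('a \<Rightarrow> 'a \<Rightarrow> bool) \<Rightarrow> 'a \<Rightarrow> 'a \<Rightarrow> 'a \<Rightarrow> 'a \<Rightarrow> bool" where
  "add_false_twin E v x = (\<lambda>a b. E a b \<or> (a = x \<and> b \<noteq> x \<and> E v b) \<or> (b = x \<and> a \<noteq> x \<and> E a v))"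

(* add a new vertex x as a true twin of v: N[x] = N[v] \<union> {x}, x adjacent to v *)
definition add_true_twin :: "('a \<Rightarrow> 'a \<Rightarrow> bool) \<Rightarrow> 'a \<Rightarrow> 'a \<Rightarrow> 'a \<Rightarrow> 'a \<Rightarrow> bool" where
  "add_true_twin E v x = (\<lambda>a b. add_false_twin E v x a b \<or> (a = v \<and> b = x) \<or> (a = x \<and> b = v))"

end

theory Submission
  imports Defs
begin

(*
  Let n be the length of an MDNS of G[H]. In the spider and in each of its twin extensions, H is a
  module (every other vertex sees all of H or none of it), so the H-vertices of a double
  neighbourhood sequence form one of G[H], and every sequence has at most n + |V' - H| terms.
  T_H followed by c_1, ..., c_r, s_1, ..., s_r is a sequence of length n + 2r in all these graphs,
  each leg s_i c_i being witnessed by s_i; this settles G. In cases (1), (2) and (4) an explicit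
  sequence attains n + 2r + 1. In cases (3) and (5) a sequence of that length would contain s_r,
  c_r, x and an MDNS of G[H], and every possible witness of the last of these vertices already
  sees three of them.
*)

section \<open>Double neighbourhood sequences\<close>

lemma cnb_subset: "cnb V E v \<subseteq> V"
  by (auto simp: cnb_def)

lemma mem_cnb_commute:
  "symp E \<Longrightarrow> u \<in> V \<Longrightarrow> w \<in> V \<Longrightarrow> u \<in> cnb V E w \<longleftrightarrow> w \<in> cnb V E u"
  by (auto simp: cnb_def dest: sympD)

lemma card_neighbour_indices:
  assumes "symp E" "distinct xs" "set xs \<subseteq> V" "u \<in> V" "i \<le> length xs"
  shows "card {j. j < i \<and> u \<in> cnb V E (xs ! j)} = card (set (take i xs) \<inter> cnb V E u)"
proof -
  have "xs ! j \<in> cnb V E u \<longleftrightarrow> u \<in> cnb V E (xs ! j)" if "j < i" for j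
    using that assms(3,5) mem_cnb_commute[OF assms(1,4)] by (meson less_le_trans nth_mem subsetD)
  then have "set (take i xs) \<inter> cnb V E u = (!) xs ` {j. j < i \<and> u \<in> cnb V E (xs ! j)}"
    unfolding nth_image[OF assms(5), symmetric] by auto
  moreover have "inj_on ((!) xs) {j. j < i \<and> u \<in> cnb V E (xs ! j)}"
    using assms(2,5) by (intro inj_on_nth) auto
  ultimately show ?thesis
    by (simp add: card_image)
qed

lemma is_DNS_iff_take:
  assumes "symp E"
  shows "is_DNS V E xs \<longleftrightarrow> distinct xs \<and> set xs \<subseteq> V \<and>
    (\<forall>i < length xs. \<exists>u \<in> cnb V E (xs ! i). card (set (take i xs) \<inter> cnb V E u) \<le> 1)"
proof -
  have count_eq: "card {j. j < i \<and> u \<in> cnb V E (xs ! j)} = card (set (take i xs) \<inter> cnb V E u)"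
    if "distinct xs" "set xs \<subseteq> V" "i < length xs" "u \<in> cnb V E (xs ! i)" for i u
  proof (rule card_neighbour_indices[OF assms that(1,2)])
    show "u \<in> V" using that(4) cnb_subset by fast
  qed (use that(3) in simp)
  have bex_eq: "(\<exists>u \<in> cnb V E (xs ! i). card {j. j < i \<and> u \<in> cnb V E (xs ! j)} \<le> 1) \<longleftrightarrow>
        (\<exists>u \<in> cnb V E (xs ! i). card (set (take i xs) \<inter> cnb V E u) \<le> 1)"
    if "distinct xs" "set xs \<subseteq> V" "i < length xs" for i
    by (intro bex_cong refl) (simp add: count_eq[OF that])
  show ?thesis
    unfolding is_DNS_def by (rule conj_cong[OF refl], rule conj_cong[OF refl], rule all_cong, rule bex_eq)
qed

lemma is_DNS_snoc_iff:
  assumes "symp E"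
  shows "is_DNS V E (xs @ [v]) \<longleftrightarrow> is_DNS V E xs \<and> v \<in> V \<and> v \<notin> set xs \<and>
    (\<exists>u \<in> cnb V E v. card (set xs \<inter> cnb V E u) \<le> 1)"
  unfolding is_DNS_iff_take[OF assms]
  by (auto simp: All_less_Suc nth_append)

lemma is_DNS_appendD:
  assumes "symp E" "is_DNS V E (xs @ ys)"
  shows "is_DNS V E xs"
proof -
  have "\<exists>u \<in> cnb V E (xs ! i). card (set (take i xs) \<inter> cnb V E u) \<le> 1" if "i < length xs" for i
  proof -
    have "(xs @ ys) ! i = xs ! i" "take i (xs @ ys) = take i xs"
      using that by (simp_all add: nth_append)
    then show ?thesis
      using assms(2) that unfolding is_DNS_iff_take[OF assms(1)] by (metis length_append trans_less_add1)
  qed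
  then show ?thesis
    using assms(2) unfolding is_DNS_iff_take[OF assms(1)] by auto
qed

lemma is_DNS_snocI:
  assumes "symp E" "is_DNS V E xs" "v \<in> V" "v \<notin> set xs" "u \<in> cnb V E v"
    and "set xs \<inter> cnb V E u \<subseteq> {w}"
  shows "is_DNS V E (xs @ [v])"
proof -
  have "card (set xs \<inter> cnb V E u) \<le> card {w}"
    using assms(6) by (intro card_mono) auto
  then show ?thesis
    using assms by (auto simp: is_DNS_snoc_iff)
qed

text \<open>Since \<open>v\<close> does not precede itself, its witness has met at most \<open>w\<close> before it;
  hence the order of \<open>L\<close> is irrelevant.\<close>

lemma is_DNS_append_private_witnesses:
  assumes "symp E" "is_DNS V E P" "distinct (P @ L)" "set L \<subseteq> V"
    and "\<And>v. v \<in> set L \<Longrightarrow> \<exists>u \<in> cnb V E v. \<exists>w. set (P @ L) \<inter> cnb V E u \<subseteq> {v, w}"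
  shows "is_DNS V E (P @ L)"
  using assms(3-5)
proof (induction L rule: rev_induct)
  case Nil
  show ?case using assms(2) by simp
next
  case (snoc v L)
  have "\<exists>u \<in> cnb V E v'. \<exists>w. set (P @ L) \<inter> cnb V E u \<subseteq> {v', w}" if v': "v' \<in> set L" for v'
  proof -
    obtain u w where "u \<in> cnb V E v'" "set (P @ L @ [v]) \<inter> cnb V E u \<subseteq> {v', w}"
      using snoc.prems(3)[of v'] v' by auto
    then show ?thesis by auto
  qed
  then have "is_DNS V E (P @ L)"
    using snoc.prems(1,2) by (intro snoc.IH) auto
  moreover obtain u w where "u \<in> cnb V E v" "set (P @ L @ [v]) \<inter> cnb V E u \<subseteq> {v, w}"
    using snoc.prems(3)[of v] by auto
  moreover have "v \<notin> set (P @ L)"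
    using snoc.prems(1) by auto
  ultimately have "is_DNS V E ((P @ L) @ [v])"
    using snoc.prems(2) by (intro is_DNS_snocI[OF assms(1), where w = w]) auto
  then show ?case by simp
qed

lemma DNS_length_le_card: "finite V \<Longrightarrow> is_DNS V E xs \<Longrightarrow> length xs \<le> card V"
  by (metis card_mono distinct_card is_DNS_def)

lemma finite_DNS_lengths:
  assumes "finite V"
  shows "finite (length ` {xs. is_DNS V E xs})"
proof (rule finite_subset)
  show "length ` {xs. is_DNS V E xs} \<subseteq> {..card V}"
    using DNS_length_le_card[OF assms] by auto
qed simp

lemma DNS_length_le_dns_num: "finite V \<Longrightarrow> is_DNS V E xs \<Longrightarrow> length xs \<le> dns_num V E"
  unfolding dns_num_def using finite_DNS_lengths by (intro Max_ge) auto

lemma is_MDNS_iff_dns_num: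
  assumes "finite V"
  shows "is_MDNS V E xs \<longleftrightarrow> is_DNS V E xs \<and> length xs = dns_num V E"
proof
  assume "is_MDNS V E xs"
  then have "dns_num V E \<le> length xs"
    unfolding dns_num_def is_MDNS_def using finite_DNS_lengths[OF assms]
    by (intro Max.boundedI) auto
  then show "is_DNS V E xs \<and> length xs = dns_num V E"
    using \<open>is_MDNS V E xs\<close> DNS_length_le_dns_num[OF assms, of E xs] by (auto simp: is_MDNS_def)
qed (use DNS_length_le_dns_num[OF assms] in \<open>auto simp: is_MDNS_def\<close>)

lemma is_DNS_induced_supergraph:
  assumes "is_DNS H E xs" "H \<subseteq> V'" "\<forall>a\<in>H. \<forall>b\<in>H. E' a b \<longleftrightarrow> E a b"
  shows "is_DNS V' E' xs"
proof -
  have cnb_eq: "u \<in> cnb V' E' w \<longleftrightarrow> u \<in> cnb H E w" if "u \<in> H" "w \<in> H" for u w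
    using that assms(2,3) by (auto simp: cnb_def)
  have xs_H: "xs ! j \<in> H" if "j < length xs" for j
    using that assms(1) by (auto simp: is_DNS_def)
  show ?thesis
    unfolding is_DNS_def
  proof (intro conjI allI impI)
    fix i assume i: "i < length xs"
    then obtain u where u: "u \<in> cnb H E (xs ! i)" "card {j. j < i \<and> u \<in> cnb H E (xs ! j)} \<le> 1"
      using assms(1) by (auto simp: is_DNS_def)
    have "u \<in> H"
      using u(1) cnb_subset by fast
    have "{j. j < i \<and> u \<in> cnb V' E' (xs ! j)} = {j. j < i \<and> u \<in> cnb H E (xs ! j)}"
      using cnb_eq[OF \<open>u \<in> H\<close>] xs_H i by auto
    moreover have "u \<in> cnb V' E' (xs ! i)"
      using cnb_eq[OF \<open>u \<in> H\<close> xs_H[OF i]] u(1) by simp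
    ultimately show "\<exists>u \<in> cnb V' E' (xs ! i). card {j. j < i \<and> u \<in> cnb V' E' (xs ! j)} \<le> 1"
      using u(2) by (intro bexI[of _ u]) simp_all
  qed (use assms in \<open>auto simp: is_DNS_def\<close>)
qed

section \<open>Modules\<close>

definition is_module :: "'a set \<Rightarrow> ('a \<Rightarrow> 'a \<Rightarrow> bool) \<Rightarrow> 'a set \<Rightarrow> bool" where
  "is_module V E M \<longleftrightarrow> (\<forall>u \<in> V - M. (\<forall>m \<in> M. E u m) \<or> (\<forall>m \<in> M. \<not> E u m))"

definition module_extension ::
  "'a set \<Rightarrow> ('a \<Rightarrow> 'a \<Rightarrow> bool) \<Rightarrow> 'a set \<Rightarrow> ('a \<Rightarrow> 'a \<Rightarrow> bool) \<Rightarrow> bool" where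
  "module_extension V' E' H E \<longleftrightarrow> finite V' \<and> symp E' \<and> H \<subseteq> V' \<and>
     (\<forall>a \<in> H. \<forall>b \<in> H. E' a b \<longleftrightarrow> E a b) \<and> is_module V' E' H"

text \<open>A witness outside the module sees all of it, so the module vertex itself can serve
  as witness inside the module.\<close>

lemma is_DNS_filter_module:
  assumes ext: "module_extension V' E' H E" and "symp E" "is_DNS V' E' ys"
  shows "is_DNS H E (filter (\<lambda>v. v \<in> H) ys)"
  using assms(3)
proof (induction ys rule: rev_induct)
  case Nil
  show ?case by (simp add: is_DNS_def)
next
  case (snoc v ys)
  have sym': "symp E'" and agree: "\<forall>a \<in> H. \<forall>b \<in> H. E' a b \<longleftrightarrow> E a b"
    and module: "is_module V' E' H"
    using ext by (simp_all add: module_extension_def)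
  obtain u where D: "is_DNS V' E' ys" and v: "v \<in> V'" "v \<notin> set ys"
    and u: "u \<in> cnb V' E' v" "card (set ys \<inter> cnb V' E' u) \<le> 1"
    using snoc.prems is_DNS_snoc_iff[OF sym'] by blast
  let ?F = "filter (\<lambda>v. v \<in> H) ys"
  have le1: "card A \<le> 1" if "A \<subseteq> set ys \<inter> cnb V' E' u" for A
    using card_mono[OF _ that] u(2) by simp
  show ?case
  proof (cases "v \<in> H")
    case False
    then show ?thesis using snoc.IH[OF D] by simp
  next
    case vH: True
    have "\<exists>w \<in> cnb H E v. card (set ?F \<inter> cnb H E w) \<le> 1"
    proof (cases "u \<in> H")
      case True
      then have "u \<in> cnb H E v" "set ?F \<inter> cnb H E u \<subseteq> set ys \<inter> cnb V' E' u"
        using u(1) vH agree ext by (auto simp: cnb_def module_extension_def)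
      then show ?thesis using le1 by blast
    next
      case False
      then have "E' u v" "u \<in> V' - H"
        using u(1) vH sym' by (auto simp: cnb_def dest: sympD)
      then have "H \<subseteq> cnb V' E' u"
        using module vH ext by (auto simp: is_module_def cnb_def module_extension_def)
      then have "set ?F \<inter> cnb H E v \<subseteq> set ys \<inter> cnb V' E' u"
        by (auto simp: cnb_def)
      moreover have "v \<in> cnb H E v"
        using vH by (simp add: cnb_def)
      ultimately show ?thesis using le1 by blast
    qed
    then show ?thesis
      using snoc.IH[OF D] vH v(2) by (simp add: is_DNS_snoc_iff[OF \<open>symp E\<close>])
  qed
qed

lemma length_eq_filter_card_diff:
  assumes "distinct ys"
  shows "length ys = length (filter (\<lambda>v. v \<in> H) ys) + card (set ys - H)"
proof -
  have "set (filter (\<lambda>v. v \<notin> H) ys) = set ys - H"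
    by auto
  then have "length (filter (\<lambda>v. v \<notin> H) ys) = card (set ys - H)"
    using distinct_card[of "filter (\<lambda>v. v \<notin> H) ys"] assms by simp
  then show ?thesis
    using sum_length_filter_compl[of "\<lambda>v. v \<in> H" ys] by simp
qed

lemma DNS_length_le_module_extension:
  assumes ext: "module_extension V' E' H E" and "symp E" "is_DNS V' E' ys"
  shows "length ys \<le> dns_num H E + card (V' - H)"
    and "length ys = dns_num H E + card (V' - H) \<Longrightarrow>
      V' - H \<subseteq> set ys \<and> is_MDNS H E (filter (\<lambda>v. v \<in> H) ys)"
proof -
  have fin: "finite V'" "finite H"
    using ext finite_subset by (auto simp: module_extension_def)
  have F: "is_DNS H E (filter (\<lambda>v. v \<in> H) ys)"
    using is_DNS_filter_module assms by blast
  have F_le: "length (filter (\<lambda>v. v \<in> H) ys) \<le> dns_num H E"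
    using DNS_length_le_dns_num[OF fin(2) F] .
  have sub: "set ys - H \<subseteq> V' - H"
    using assms(3) by (auto simp: is_DNS_def)
  have diff_le: "card (set ys - H) \<le> card (V' - H)"
    using card_mono[OF _ sub] fin by simp
  have len: "length ys = length (filter (\<lambda>v. v \<in> H) ys) + card (set ys - H)"
    using length_eq_filter_card_diff assms(3) by (auto simp: is_DNS_def)
  show "length ys \<le> dns_num H E + card (V' - H)"
    using len F_le diff_le by linarith
  assume "length ys = dns_num H E + card (V' - H)"
  then have "length (filter (\<lambda>v. v \<in> H) ys) = dns_num H E" "card (set ys - H) = card (V' - H)"
    using len F_le diff_le by linarith+
  then show "V' - H \<subseteq> set ys \<and> is_MDNS H E (filter (\<lambda>v. v \<in> H) ys)"
    using card_subset_eq[OF _ sub] fin F is_MDNS_iff_dns_num by blast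
qed

lemma MDNS_saturated:
  assumes "symp E" "is_MDNS V E F" "y \<in> V" "y \<notin> set F" "t \<in> cnb V E y"
  shows "2 \<le> card (set F \<inter> cnb V E t)"
proof (rule ccontr)
  assume "\<not> 2 \<le> card (set F \<inter> cnb V E t)"
  then have "card (set F \<inter> cnb V E t) \<le> 1"
    by simp
  then have "is_DNS V E (F @ [y])"
    using assms by (auto simp: is_DNS_snoc_iff is_MDNS_def)
  then show False
    using assms(2) unfolding is_MDNS_def by fastforce
qed

lemma MDNS_dominating:
  assumes "symp E" "is_MDNS V E F" "y \<in> V"
  obtains a where "a \<in> set F" "a \<in> cnb V E y"
proof (cases "y \<in> set F")
  case True
  then show ?thesis using that assms(3) by (auto simp: cnb_def)
next
  case False
  have "2 \<le> card (set F \<inter> cnb V E y)"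
    using MDNS_saturated[OF assms False] assms(3) by (simp add: cnb_def)
  then have "set F \<inter> cnb V E y \<noteq> {}"
    by auto
  then show ?thesis using that by blast
qed

lemma MDNS_doubly_dominating:
  assumes "symp E" "is_MDNS V E F" "t \<in> V" "t' \<in> cnb V E t" "t' \<noteq> t"
  shows "2 \<le> card (set F \<inter> cnb V E t)"
proof -
  have t_t: "t \<in> cnb V E t" and t'_t: "t \<in> cnb V E t'" and "t' \<in> V"
    using assms(3-5) mem_cnb_commute[OF assms(1)] cnb_subset by (auto simp: cnb_def)
  consider "t \<notin> set F" | "t' \<notin> set F" | "{t, t'} \<subseteq> set F \<inter> cnb V E t"
    using t_t assms(4) by blast
  then show ?thesis
  proof cases
    case 3
    then have "card {t, t'} \<le> card (set F \<inter> cnb V E t)"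
      by (intro card_mono) auto
    then show ?thesis using assms(5) by simp
  qed (use MDNS_saturated[OF assms(1,2)] t_t t'_t assms(3) \<open>t' \<in> V\<close> in blast)+
qed

text \<open>The witness of the last vertex of \<open>Y\<close> in the sequence has met all of \<open>Y\<close>
  except that vertex.\<close>

lemma DNS_sparse_witness:
  assumes "symp E" "is_DNS V E ys" "Y \<subseteq> set ys" "Y \<noteq> {}"
  obtains z u where "z \<in> Y" "u \<in> cnb V E z" "card (Y \<inter> cnb V E u) \<le> 2"
proof -
  obtain pre z post where ys: "ys = pre @ z # post" and z: "z \<in> Y" and post: "\<forall>w \<in> set post. w \<notin> Y"
    using split_list_last_prop[of ys "\<lambda>w. w \<in> Y"] assms(3,4) by blast
  have "is_DNS V E ((pre @ [z]) @ post)"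
    using assms(2) ys by simp
  then obtain u where u: "u \<in> cnb V E z" "card (set pre \<inter> cnb V E u) \<le> 1"
    using is_DNS_appendD[OF assms(1)] is_DNS_snoc_iff[OF assms(1)] by blast
  have "Y \<inter> cnb V E u \<subseteq> insert z (set pre \<inter> cnb V E u)"
    using assms(3) ys post by auto
  then have "card (Y \<inter> cnb V E u) \<le> card (insert z (set pre \<inter> cnb V E u))"
    by (intro card_mono) auto
  also have "\<dots> \<le> 2"
    using u(2) by (simp add: card_insert_if)
  finally show ?thesis
    using that z u(1) by blast
qed

lemma symp_add_false_twin: "symp E \<Longrightarrow> symp (add_false_twin E v x)"
  unfolding add_false_twin_def symp_def by blast

lemma symp_add_true_twin: "symp E \<Longrightarrow> symp (add_true_twin E v x)"
  unfolding add_true_twin_def add_false_twin_def symp_def by blast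

lemma module_extension_add_twin:
  assumes "simple_graph V E" and ext: "module_extension V E H E\<^sub>H" and "v \<in> V - H" "x \<notin> V"
    and twin: "E' \<in> {add_false_twin E v x, add_true_twin E v x}"
  shows "module_extension (insert x V) E' H E\<^sub>H"
proof -
  have "x \<notin> H"
    using ext assms(4) by (auto simp: module_extension_def)
  moreover have "\<not> E x m" for m
    using assms(1,4) by (auto simp: simple_graph_def)
  ultimately have adj_H: "\<forall>m \<in> H. E' u m \<longleftrightarrow> E (if u = x then v else u) m" for u
    using twin assms(3) by (auto simp: add_true_twin_def add_false_twin_def)
  have "is_module (insert x V) E' H"
    unfolding is_module_def
  proof
    fix u assume "u \<in> insert x V - H"
    then have "(if u = x then v else u) \<in> V - H"
      using assms(3) by auto
    then show "(\<forall>m \<in> H. E' u m) \<or> (\<forall>m \<in> H. \<not> E' u m)"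
      using ext adj_H[of u] by (simp add: module_extension_def is_module_def)
  qed
  moreover have "symp E'"
    using twin ext symp_add_false_twin symp_add_true_twin by (auto simp: module_extension_def)
  ultimately show ?thesis
    using ext adj_H \<open>x \<notin> H\<close> by (auto simp: module_extension_def)
qed

lemma MDNS_if_length_eq_module_bound:
  assumes "module_extension V' E' H E" "symp E" "is_DNS V' E' L"
    and "length L = dns_num H E + card (V' - H)"
  shows "is_MDNS V' E' L \<and> dns_num V' E' = length L"
proof -
  have "is_MDNS V' E' L"
    using assms DNS_length_le_module_extension(1)[OF assms(1,2)] by (simp add: is_MDNS_def)
  moreover have "finite V'"
    using assms(1) by (simp add: module_extension_def)
  ultimately show ?thesis
    using is_MDNS_iff_dns_num by metis
qed

lemma three_le_card:
  assumes "finite A" "{a, b, d} \<subseteq> A" "a \<noteq> b" "a \<noteq> d" "b \<noteq> d"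
  shows "3 \<le> card A"
  using card_mono[OF assms(1,2)] assms(3-5) by simp

section \<open>Thin spiders with a twin\<close>

locale spider_twin =
  fixes V :: "'a set" and E :: "'a \<Rightarrow> 'a \<Rightarrow> bool" and r :: nat
    and s c :: "nat \<Rightarrow> 'a" and H :: "'a set" and T :: "'a list" and x :: 'a
  assumes thin_spider: "thin_spider V E r s c H"
    and MDNS_H: "is_MDNS H E T"
    and fresh: "x \<notin> V"
begin

lemma simple_graph: "simple_graph V E"
  and r_ge_2: "2 \<le> r"
  and inj_s: "inj_on s {1..r}" and inj_c: "inj_on c {1..r}"
  and S_C_disjoint: "s ` {1..r} \<inter> c ` {1..r} = {}"
  and S_H_disjoint: "s ` {1..r} \<inter> H = {}" and C_H_disjoint: "c ` {1..r} \<inter> H = {}"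
  and V_eq: "V = s ` {1..r} \<union> c ` {1..r} \<union> H"
  and E_s_s: "\<forall>i \<in> {1..r}. \<forall>j \<in> {1..r}. \<not> E (s i) (s j)"
  and E_c_c: "\<forall>i \<in> {1..r}. \<forall>j \<in> {1..r}. i \<noteq> j \<longrightarrow> E (c i) (c j)"
  and E_s_c: "\<forall>i \<in> {1..r}. \<forall>j \<in> {1..r}. E (s i) (c j) \<longleftrightarrow> i = j"
  and E_c_H: "\<forall>i \<in> {1..r}. \<forall>h \<in> H. E (c i) h"
  and E_s_H: "\<forall>i \<in> {1..r}. \<forall>h \<in> H. \<not> E (s i) h"
  by (insert thin_spider[unfolded thin_spider_def], elim conjE, assumption)+

lemma symp_E: "symp E"
  using simple_graph by (auto simp: simple_graph_def symp_def)

lemma not_E_self [simp]: "\<not> E v v"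
  using simple_graph by (simp add: simple_graph_def)

lemma E_in_V: "E a b \<Longrightarrow> a \<in> V \<and> b \<in> V"
  using simple_graph by (simp add: simple_graph_def)

lemma finite_V: "finite V"
  using simple_graph by (simp add: simple_graph_def)

lemma H_subset_V: "H \<subseteq> V"
  using V_eq by blast

lemma r_in_range [simp]: "r \<in> {1..r}" "1 \<in> {1..r}" "Suc 0 \<le> r"
  using r_ge_2 by auto

lemma spider_vertices_distinct [simp]:
  assumes "i \<in> {1..r}" "j \<in> {1..r}"
  shows "s i \<noteq> c j" "c i \<noteq> s j" "s i = s j \<longleftrightarrow> i = j" "c i = c j \<longleftrightarrow> i = j"
  using assms S_C_disjoint inj_s inj_c by (blast dest: inj_onD)+

lemma spider_vertices_in_V [simp]:
  assumes "i \<in> {1..r}"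
  shows "s i \<in> V" "c i \<in> V" "s i \<notin> H" "c i \<notin> H"
  using assms V_eq S_H_disjoint C_H_disjoint by blast+

lemma fresh_vertex [simp]:
  assumes "i \<in> {1..r}"
  shows "x \<noteq> s i" "x \<noteq> c i" "s i \<noteq> x" "c i \<noteq> x"
  using assms fresh spider_vertices_in_V by metis+

lemma fresh_notin_H [simp]: "x \<notin> H" and not_E_fresh [simp]: "\<not> E x v" "\<not> E v x"
  using fresh H_subset_V E_in_V by blast+

lemma E_s_iff [simp]:
  assumes "i \<in> {1..r}"
  shows "E (s i) v \<longleftrightarrow> v = c i" "E v (s i) \<longleftrightarrow> v = c i"
proof -
  show "E (s i) v \<longleftrightarrow> v = c i"
    using assms E_in_V[of "s i" v] V_eq E_s_s E_s_c E_s_H by auto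
  then show "E v (s i) \<longleftrightarrow> v = c i"
    using symp_E by (auto dest: sympD)
qed

lemma E_c_c_iff [simp]: "i \<in> {1..r} \<Longrightarrow> j \<in> {1..r} \<Longrightarrow> E (c i) (c j) \<longleftrightarrow> i \<noteq> j"
  using E_c_c by auto

lemma E_c_H_iff [simp]:
  assumes "i \<in> {1..r}" "h \<in> H"
  shows "E (c i) h" "E h (c i)"
proof -
  show "E (c i) h"
    using assms E_c_H by blast
  then show "E h (c i)"
    using symp_E by (rule sympD[rotated])
qed

lemma finite_H: "finite H"
  using finite_subset[OF H_subset_V finite_V] .

lemma dns_num_H: "dns_num H E = length T"
  using MDNS_H by (simp add: is_MDNS_iff_dns_num[OF finite_H])

lemma T_subset_H: "set T \<subseteq> H"
  using MDNS_H by (simp add: is_MDNS_def is_DNS_def)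

lemma card_V_diff_H: "card (V - H) = 2 * r"
proof -
  have "V - H = s ` {1..r} \<union> c ` {1..r}"
    using V_eq S_H_disjoint C_H_disjoint by blast
  moreover have "card (s ` {1..r}) = r" "card (c ` {1..r}) = r"
    using inj_s inj_c by (simp_all add: card_image)
  ultimately show ?thesis
    using S_C_disjoint by (simp add: card_Un_disjoint)
qed

lemma card_insert_fresh_diff_H: "card (insert x V - H) = 2 * r + 1"
proof -
  have "insert x V - H = insert x (V - H)"
    by auto
  then show ?thesis
    using card_V_diff_H fresh finite_V by simp
qed

lemma module_extension_spider: "module_extension V E H E"
  unfolding module_extension_def is_module_def
  using finite_V symp_E H_subset_V V_eq by auto

text \<open>Each leg \<open>s\<^sub>i c\<^sub>i\<close> is witnessed by \<open>s\<^sub>i\<close>, whose closed neighbourhood meets the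
  sequence only in \<open>{s\<^sub>i, c\<^sub>i}\<close>.\<close>

lemma is_DNS_append_legs:
  assumes "symp E'" "is_DNS V' E' P" "V \<subseteq> V'" "k \<le> r + 1"
    and legs: "\<And>i. i \<in> {1..<k} \<Longrightarrow>
      E' (s i) (c i) \<and> cnb V' E' (s i) \<subseteq> {s i, c i, x} \<and> cnb V' E' (s i) \<inter> set P = {}"
  shows "is_DNS V' E' (P @ map c [1..<k] @ map s [1..<k])"
proof (rule is_DNS_append_private_witnesses[OF assms(1,2)])
  let ?L = "map c [1..<k] @ map s [1..<k]"
  have range: "{1..<k} \<subseteq> {1..r}"
    using assms(4) by auto
  have leg_in_V: "s i \<in> V'" "c i \<in> V'" if "i \<in> {1..<k}" for i
    using subsetD[OF range that] assms(3) by auto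
  have leg_in_cnb: "s i \<in> cnb V' E' (s i)" "c i \<in> cnb V' E' (s i)" "s i \<in> cnb V' E' (c i)"
    if "i \<in> {1..<k}" for i
    using legs[OF that] leg_in_V[OF that] sympD[OF assms(1)] by (auto simp: cnb_def)
  have set_L: "set ?L = c ` {1..<k} \<union> s ` {1..<k}"
    by auto
  have "distinct ?L"
    using inj_on_subset[OF inj_s range] inj_on_subset[OF inj_c range] S_C_disjoint range
    by (auto simp: distinct_map)
  moreover have "set P \<inter> set ?L = {}"
    unfolding set_L using legs leg_in_cnb by blast
  ultimately show "distinct (P @ ?L)"
    using assms(2) by (simp add: is_DNS_def)
  show "set ?L \<subseteq> V'"
    unfolding set_L using leg_in_V by blast
  fix v assume "v \<in> set ?L"
  then obtain i where i: "i \<in> {1..<k}" and v: "v = c i \<or> v = s i"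
    by auto
  have "x \<notin> set ?L"
    unfolding set_L using range by auto
  then have "set (P @ ?L) \<inter> cnb V' E' (s i) \<subseteq> {s i, c i}"
    using legs[OF i] by auto
  then show "\<exists>u \<in> cnb V' E' v. \<exists>w. set (P @ ?L) \<inter> cnb V' E' u \<subseteq> {v, w}"
    using v leg_in_cnb[OF i] by blast
qed

lemma is_DNS_T_legs:
  assumes ext: "module_extension V' E' H E" and "V \<subseteq> V'"
    and legs: "\<And>i. i \<in> {1..r} \<Longrightarrow> E' (s i) (c i) \<and> cnb V' E' (s i) \<subseteq> {s i, c i, x}"
  shows "is_DNS V' E' (T @ map c [1..<r+1] @ map s [1..<r+1])"
proof -
  have T: "is_DNS V' E' T"
    by (rule is_DNS_induced_supergraph[of H E])
      (use MDNS_H ext in \<open>auto simp: is_MDNS_def module_extension_def\<close>)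
  have "E' (s i) (c i) \<and> cnb V' E' (s i) \<subseteq> {s i, c i, x} \<and> cnb V' E' (s i) \<inter> set T = {}"
    if "i \<in> {1..<r+1}" for i
  proof -
    have i: "i \<in> {1..r}"
      using that by auto
    then show ?thesis
      using legs[OF i] T_subset_H spider_vertices_in_V(3,4)[OF i] fresh_notin_H by blast
  qed
  moreover have "symp E'"
    using ext by (simp add: module_extension_def)
  ultimately show ?thesis
    by (intro is_DNS_append_legs[OF _ T assms(2)]) simp_all
qed

lemma MDNS_spider:
  "is_MDNS V E (T @ map c [1..<r+1] @ map s [1..<r+1]) \<and> dns_num V E = 2 * r + dns_num H E"
proof -
  have "is_DNS V E (T @ map c [1..<r+1] @ map s [1..<r+1])"
    by (rule is_DNS_T_legs[OF module_extension_spider subset_refl]) (auto simp: cnb_def)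
  then show ?thesis
    using MDNS_if_length_eq_module_bound[OF module_extension_spider symp_E] card_V_diff_H dns_num_H
    by (simp del: upt_Suc)
qed

definition twin_extension :: "('a \<Rightarrow> 'a \<Rightarrow> bool) \<Rightarrow> bool" where
  "twin_extension E' \<longleftrightarrow> (\<exists>v \<in> {s r, c r}. E' \<in> {add_false_twin E v x, add_true_twin E v x})"

lemma module_extension_twin:
  assumes "twin_extension E'"
  shows "module_extension (insert x V) E' H E"
proof -
  obtain v where "v \<in> {s r, c r}" "E' \<in> {add_false_twin E v x, add_true_twin E v x}"
    using assms by (auto simp: twin_extension_def)
  moreover from this have "v \<in> V - H"
    by auto
  ultimately show ?thesis
    using module_extension_add_twin[OF simple_graph module_extension_spider _ fresh] by blast
qed

lemma symp_twin:
  assumes "twin_extension E'"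
  shows "symp E'"
  using module_extension_twin[OF assms] by (simp add: module_extension_def)

lemma twin_legs:
  assumes "twin_extension E'" "i \<in> {1..r}"
  shows "E' (s i) (c i)" "cnb (insert x V) E' (s i) \<subseteq> {s i, c i, x}"
    and "i \<noteq> r \<Longrightarrow> cnb (insert x V) E' (s i) \<subseteq> {s i, c i}"
  using assms by (auto simp: twin_extension_def cnb_def add_true_twin_def add_false_twin_def)

lemma twin_DNS_legs:
  "twin_extension E' \<Longrightarrow> is_DNS (insert x V) E' (T @ map c [1..<r+1] @ map s [1..<r+1])"
  using is_DNS_T_legs[OF module_extension_twin subset_insertI] twin_legs(1,2) by blast

lemma twin_MDNS_if_length_eq_bound:
  assumes "twin_extension E'" "is_DNS (insert x V) E' L" "length L = dns_num H E + 2 * r + 1"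
  shows "is_MDNS (insert x V) E' L \<and> dns_num (insert x V) E' = length L"
  using MDNS_if_length_eq_module_bound[OF module_extension_twin[OF assms(1)] symp_E assms(2)]
    assms(3) card_insert_fresh_diff_H by simp

lemma twin_MDNS_legs_if_bound_unattained:
  assumes "twin_extension E'"
    and unattained: "\<And>ys. is_DNS (insert x V) E' ys \<Longrightarrow> length ys \<noteq> dns_num H E + 2 * r + 1"
  shows "is_MDNS (insert x V) E' (T @ map c [1..<r+1] @ map s [1..<r+1]) \<and>
    dns_num (insert x V) E' = 2 * r + dns_num H E"
proof -
  have "length ys \<le> length T + 2 * r" if "is_DNS (insert x V) E' ys" for ys
    using DNS_length_le_module_extension(1)[OF module_extension_twin[OF assms(1)] symp_E that]
      unattained[OF that] card_insert_fresh_diff_H dns_num_H by simp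
  then have "is_MDNS (insert x V) E' (T @ map c [1..<r+1] @ map s [1..<r+1])"
    using twin_DNS_legs[OF assms(1)] by (simp add: is_MDNS_def mult_2 del: upt_Suc)
  then show ?thesis
    using is_MDNS_iff_dns_num[of "insert x V"] finite_V dns_num_H by (simp del: upt_Suc)
qed

text \<open>A sequence attaining the module bound contains \<open>s\<^sub>r, c\<^sub>r, x\<close>, and its \<open>H\<close>-part \<open>F\<close> is
  an MDNS of \<open>G[H]\<close>; \<open>u\<close> is the witness of the last of these vertices.\<close>

lemma twin_full_DNS_sparse_witness:
  assumes twin: "twin_extension E'"
    and "is_DNS (insert x V) E' ys" "length ys = dns_num H E + 2 * r + 1"
  obtains F u where "is_MDNS H E F" "u \<in> {s r, x} \<union> c ` {1..r} \<union> H"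
    "card (({s r, c r, x} \<union> set F) \<inter> cnb (insert x V) E' u) \<le> 2"
proof -
  let ?F = "filter (\<lambda>v. v \<in> H) ys"
  let ?Y = "{s r, c r, x} \<union> set ?F"
  have "insert x V - H \<subseteq> set ys" and F: "is_MDNS H E ?F"
    using DNS_length_le_module_extension(2)[OF module_extension_twin[OF twin] symp_E assms(2)]
      assms(3) card_insert_fresh_diff_H by auto
  then have "?Y \<subseteq> set ys"
    by auto
  then obtain z u where z: "z \<in> ?Y" and u: "u \<in> cnb (insert x V) E' z"
    and sparse: "card (?Y \<inter> cnb (insert x V) E' u) \<le> 2"
    using DNS_sparse_witness[OF symp_twin[OF twin] assms(2)] by blast
  have "u \<in> {s r, x} \<union> c ` {1..r} \<union> H"
  proof (rule ccontr)
    assume "u \<notin> {s r, x} \<union> c ` {1..r} \<union> H"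
    moreover have "u \<in> insert x V"
      using u cnb_subset by fast
    ultimately obtain j where j: "j \<in> {1..r}" "u = s j"
      using V_eq by blast
    with \<open>u \<notin> {s r, x} \<union> c ` {1..r} \<union> H\<close> have "j \<noteq> r"
      by blast
    have "z \<in> insert x V"
      using z H_subset_V by auto
    then have "z \<in> cnb (insert x V) E' (s j)"
      using u j mem_cnb_commute[OF symp_twin[OF twin], of u "insert x V" z] \<open>u \<in> insert x V\<close>
      by simp
    then have "z \<in> {s j, c j}"
      using twin_legs(3)[OF twin j(1) \<open>j \<noteq> r\<close>] by blast
    moreover have "s j \<notin> ?Y" "c j \<notin> ?Y"
      using j(1) \<open>j \<noteq> r\<close> by auto
    ultimately show False
      using z by blast
  qed
  then show ?thesis
    using that F sparse by blast
qed

lemma MDNS_false_twin_s: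
  "dns_num (insert x V) (add_false_twin E (s r) x) = dns_num V E + 1 \<and>
   dns_num V E + 1 = 2 * r + 1 + dns_num H E \<and>
   is_MDNS (insert x V) (add_false_twin E (s r) x) (T @ map c [1..<r+1] @ map s [1..<r+1] @ [x])"
proof -
  let ?E = "add_false_twin E (s r) x"
  let ?L = "T @ map c [1..<r+1] @ map s [1..<r+1]"
  have twin: "twin_extension ?E"
    by (simp add: twin_extension_def)
  have "x \<notin> set ?L"
    using T_subset_H by auto
  moreover have "set ?L \<inter> cnb (insert x V) ?E x \<subseteq> {c r}"
    using T_subset_H by (auto simp: cnb_def add_false_twin_def)
  ultimately have "is_DNS (insert x V) ?E (?L @ [x])"
    by (intro is_DNS_snocI[OF symp_twin[OF twin] twin_DNS_legs[OF twin], where u = x])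
      (auto simp: cnb_def)
  then show ?thesis
    using twin_MDNS_if_length_eq_bound[OF twin] MDNS_spider dns_num_H by (simp del: upt_Suc)
qed

lemma MDNS_true_twin_s_isolated:
  assumes "H = {} \<or> a_iso H E = 1"
  shows "dns_num (insert x V) (add_true_twin E (s r) x) = dns_num V E + 1 \<and>
    dns_num V E + 1 = 2 * r + 1 + dns_num H E \<and>
    is_MDNS (insert x V) (add_true_twin E (s r) x) (T @ [s r, x, c r] @ map c [1..<r] @ map s [1..<r])"
proof -
  let ?E = "add_true_twin E (s r) x" and ?V = "insert x V"
  have twin: "twin_extension ?E"
    by (simp add: twin_extension_def)
  note sym = symp_twin[OF twin]
  have "is_DNS ?V ?E T"
    using is_DNS_appendD[OF sym twin_DNS_legs[OF twin]] .
  then have "is_DNS ?V ?E (T @ [s r])"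
    by (rule is_DNS_snocI[OF sym, where u = "s r" and w = "s r"])
      (use T_subset_H in \<open>auto simp: cnb_def add_true_twin_def add_false_twin_def\<close>)
  then have "is_DNS ?V ?E ((T @ [s r]) @ [x])"
    by (rule is_DNS_snocI[OF sym, where u = x and w = "s r"])
      (use T_subset_H in \<open>auto simp: cnb_def add_true_twin_def add_false_twin_def\<close>)
  moreover obtain w where "w \<in> cnb ?V ?E (c r)" "set (T @ [s r, x]) \<inter> cnb ?V ?E w \<subseteq> {w}"
  proof (cases "H = {}")
    case True
    then have "set (T @ [s r, x]) \<inter> cnb ?V ?E (c 1) \<subseteq> {c 1}" "c 1 \<in> cnb ?V ?E (c r)"
      using T_subset_H r_ge_2 by (auto simp: cnb_def add_true_twin_def add_false_twin_def)
    then show ?thesis using that by blast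
  next
    case False
    then obtain h where h: "h \<in> H" "\<forall>u \<in> H. \<not> E h u"
      using assms by (auto simp: a_iso_def split: if_splits)
    then have "set (T @ [s r, x]) \<inter> cnb ?V ?E h \<subseteq> {h}" "h \<in> cnb ?V ?E (c r)"
      using T_subset_H H_subset_V by (auto simp: cnb_def add_true_twin_def add_false_twin_def)
    then show ?thesis using that by blast
  qed
  ultimately have "is_DNS ?V ?E ((T @ [s r, x]) @ [c r])"
    by (intro is_DNS_snocI[OF sym, where v = "c r"]) (use T_subset_H in auto)
  moreover have "?E (s i) (c i) \<and> cnb ?V ?E (s i) \<subseteq> {s i, c i, x} \<and>
      cnb ?V ?E (s i) \<inter> set (T @ [s r, x, c r]) = {}" if "i \<in> {1..<r}" for i
  proof -
    have i: "i \<in> {1..r}" "i \<noteq> r"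
      using that by auto
    moreover have "s i \<notin> set (T @ [s r, x, c r])" "c i \<notin> set (T @ [s r, x, c r])"
      using i T_subset_H by auto
    ultimately show ?thesis
      using twin_legs[OF twin i(1)] twin_legs(3)[OF twin i] by blast
  qed
  ultimately have "is_DNS ?V ?E ((T @ [s r, x, c r]) @ map c [1..<r] @ map s [1..<r])"
    by (intro is_DNS_append_legs[OF sym _ subset_insertI]) simp_all
  then show ?thesis
    using twin_MDNS_if_length_eq_bound[OF twin] MDNS_spider dns_num_H r_ge_2 by simp
qed

lemma true_twin_s_bound_unattained:
  assumes "H \<noteq> {}" "a_iso H E = 0" "is_DNS (insert x V) (add_true_twin E (s r) x) ys"
  shows "length ys \<noteq> dns_num H E + 2 * r + 1"
proof
  let ?E = "add_true_twin E (s r) x"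
  have twin: "twin_extension ?E"
    by (simp add: twin_extension_def)
  assume "length ys = dns_num H E + 2 * r + 1"
  then obtain F u where F: "is_MDNS H E F" and u: "u \<in> {s r, x} \<union> c ` {1..r} \<union> H"
    and sparse: "card (({s r, c r, x} \<union> set F) \<inter> cnb (insert x V) ?E u) \<le> 2"
    using twin_full_DNS_sparse_witness[OF twin assms(3)] by blast
  let ?N = "cnb (insert x V) ?E u"
  have F_H: "set F \<subseteq> H"
    using F by (auto simp: is_MDNS_def is_DNS_def)
  have doubly: "2 \<le> card (set F \<inter> cnb H E h)" if h: "h \<in> H" for h
  proof -
    obtain h' where "h' \<in> H" "E h h'"
      using h assms(2) by (auto simp: a_iso_def split: if_splits)
    then have "h' \<in> cnb H E h" "h' \<noteq> h"
      by (auto simp: cnb_def)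
    then show ?thesis
      using MDNS_doubly_dominating[OF symp_E F h] by blast
  qed
  have "3 \<le> card (({s r, c r, x} \<union> set F) \<inter> ?N)"
  proof (cases "u \<in> {s r, x, c r}")
    case True
    then have "{s r, c r, x} \<subseteq> ({s r, c r, x} \<union> set F) \<inter> ?N"
      by (auto simp: cnb_def add_true_twin_def add_false_twin_def)
    then show ?thesis
      by (rule three_le_card[rotated]) auto
  next
    case False
    then have u': "u \<in> c ` {1..r} \<union> H"
      using u by blast
    have "2 \<le> card (set F \<inter> ?N)"
    proof (cases "u \<in> H")
      case True
      have "set F \<inter> cnb H E u \<subseteq> set F \<inter> ?N"
        using H_subset_V by (auto simp: cnb_def add_true_twin_def add_false_twin_def)
      then have "card (set F \<inter> cnb H E u) \<le> card (set F \<inter> ?N)"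
        by (intro card_mono) auto
      then show ?thesis
        using doubly[OF True] by linarith
    next
      case False
      then have "set F \<subseteq> ?N"
        using u' F_H H_subset_V by (auto simp: cnb_def add_true_twin_def add_false_twin_def)
      obtain h where h: "h \<in> H"
        using assms(1) by blast
      have "2 \<le> card (set F \<inter> cnb H E h)"
        using doubly[OF h] .
      also have "\<dots> \<le> card (set F \<inter> ?N)"
        using \<open>set F \<subseteq> ?N\<close> by (intro card_mono) auto
      finally show ?thesis .
    qed
    moreover have "c r \<in> ?N" "c r \<notin> set F"
      using u' F_H H_subset_V by (auto simp: cnb_def add_true_twin_def add_false_twin_def)
    then have "card (insert (c r) (set F \<inter> ?N)) = Suc (card (set F \<inter> ?N))"
      by simp
    moreover have "card (insert (c r) (set F \<inter> ?N)) \<le> card (({s r, c r, x} \<union> set F) \<inter> ?N)"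
      using \<open>c r \<in> ?N\<close> by (intro card_mono) auto
    ultimately show ?thesis
      by linarith
  qed
  then show False
    using sparse by simp
qed

lemma MDNS_true_twin_s_no_isolated:
  assumes "H \<noteq> {}" "a_iso H E = 0"
  shows "dns_num (insert x V) (add_true_twin E (s r) x) = 2 * r + dns_num H E \<and>
    is_MDNS (insert x V) (add_true_twin E (s r) x) (T @ map c [1..<r+1] @ map s [1..<r+1])"
  using twin_MDNS_legs_if_bound_unattained[of "add_true_twin E (s r) x"]
    true_twin_s_bound_unattained[OF assms] by (simp add: twin_extension_def)

lemma MDNS_twin_c_empty_H:
  assumes "H = {}" "E' \<in> {add_false_twin E (c r) x, add_true_twin E (c r) x}"
  shows "is_MDNS (insert x V) E' ([s r, c r, x] @ map c [1..<r] @ map s [1..<r]) \<and>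
    dns_num (insert x V) E' = 2 * r + 1"
proof -
  let ?V = "insert x V"
  have twin: "twin_extension E'"
    using assms(2) by (auto simp: twin_extension_def)
  note sym = symp_twin[OF twin]
  have "T = []"
    using T_subset_H assms(1) by simp
  have "is_DNS ?V E' ([] @ [s r])"
    by (rule is_DNS_snocI[OF sym, where u = "s r" and w = "s r"])
      (auto simp: is_DNS_def cnb_def)
  then have "is_DNS ?V E' (([] @ [s r]) @ [c r])"
    by (rule is_DNS_snocI[OF sym, where u = "c r" and w = "s r"]) (auto simp: cnb_def)
  then have "is_DNS ?V E' ((([] @ [s r]) @ [c r]) @ [x])"
    by (rule is_DNS_snocI[OF sym, where u = "c 1" and w = "c r"])
      (use assms(2) r_ge_2 in \<open>auto simp: cnb_def add_true_twin_def add_false_twin_def\<close>)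
  then have "is_DNS ?V E' [s r, c r, x]"
    by simp
  moreover have "E' (s i) (c i) \<and> cnb ?V E' (s i) \<subseteq> {s i, c i, x} \<and>
      cnb ?V E' (s i) \<inter> set [s r, c r, x] = {}" if "i \<in> {1..<r}" for i
  proof -
    have i: "i \<in> {1..r}" "i \<noteq> r"
      using that by auto
    moreover have "s i \<notin> set [s r, c r, x]" "c i \<notin> set [s r, c r, x]"
      using i by auto
    ultimately show ?thesis
      using twin_legs[OF twin i(1)] twin_legs(3)[OF twin i] by blast
  qed
  ultimately have "is_DNS ?V E' ([s r, c r, x] @ map c [1..<r] @ map s [1..<r])"
    by (intro is_DNS_append_legs[OF sym _ subset_insertI]) simp_all
  then show ?thesis
    using twin_MDNS_if_length_eq_bound[OF twin] dns_num_H \<open>T = []\<close> r_ge_2 by simp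
qed

lemma twin_c_bound_unattained:
  assumes "H \<noteq> {}" and E': "E' \<in> {add_false_twin E (c r) x, add_true_twin E (c r) x}"
    and "is_DNS (insert x V) E' ys"
  shows "length ys \<noteq> dns_num H E + 2 * r + 1"
proof
  have twin: "twin_extension E'"
    using assms(2) by (auto simp: twin_extension_def)
  assume "length ys = dns_num H E + 2 * r + 1"
  then obtain F u where F: "is_MDNS H E F" and u: "u \<in> {s r, x} \<union> c ` {1..r} \<union> H"
    and sparse: "card (({s r, c r, x} \<union> set F) \<inter> cnb (insert x V) E' u) \<le> 2"
    using twin_full_DNS_sparse_witness[OF twin assms(3)] by blast
  let ?Y = "({s r, c r, x} \<union> set F) \<inter> cnb (insert x V) E' u"
  have F_H: "set F \<subseteq> H"
    using F by (auto simp: is_MDNS_def is_DNS_def)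
  have three: "3 \<le> card ?Y" if "{a, b, d} \<subseteq> ?Y" "a \<noteq> b" "a \<noteq> d" "b \<noteq> d" for a b d
    using three_le_card[OF _ that] by simp
  obtain a\<^sub>0 where a\<^sub>0: "a\<^sub>0 \<in> set F"
    using assms(1) MDNS_dominating[OF symp_E F] by blast
  then have a\<^sub>0_H: "a\<^sub>0 \<in> H" "a\<^sub>0 \<noteq> x"
    using F_H by auto
  consider "u = s r" | "u = x" | j where "j \<in> {1..r}" "u = c j" | "u \<in> H"
    using u by blast
  then have "3 \<le> card ?Y"
  proof cases
    case 1
    then show ?thesis
      using E' by (intro three[of "s r" "c r" x]) (auto simp: cnb_def add_true_twin_def add_false_twin_def)
  next
    case 2
    then show ?thesis
      using E' a\<^sub>0 a\<^sub>0_H H_subset_V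
      by (intro three[of x "s r" a\<^sub>0]) (auto simp: cnb_def add_true_twin_def add_false_twin_def)
  next
    case (3 j)
    then show ?thesis
    proof (cases "j = r")
      case True
      then show ?thesis
        using 3 E' a\<^sub>0 a\<^sub>0_H H_subset_V
        by (intro three[of "c r" "s r" a\<^sub>0]) (auto simp: cnb_def add_true_twin_def add_false_twin_def)
    next
      case False
      then show ?thesis
        using 3 E' a\<^sub>0 a\<^sub>0_H H_subset_V
        by (intro three[of "c r" x a\<^sub>0]) (auto simp: cnb_def add_true_twin_def add_false_twin_def)
    qed
  next
    case 4
    then obtain a where a: "a \<in> set F" "a \<in> cnb H E u"
      using MDNS_dominating[OF symp_E F] by blast
    moreover have "a \<noteq> x"
      using a F_H by auto
    ultimately show ?thesis
      using 4 E' F_H H_subset_V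
      by (intro three[of "c r" x a]) (auto simp: cnb_def add_true_twin_def add_false_twin_def)
  qed
  then show False
    using sparse by simp
qed

lemma MDNS_twin_c_nonempty_H:
  assumes "H \<noteq> {}" "E' \<in> {add_false_twin E (c r) x, add_true_twin E (c r) x}"
  shows "is_MDNS (insert x V) E' (T @ map c [1..<r+1] @ map s [1..<r+1]) \<and>
    dns_num (insert x V) E' = 2 * r + dns_num H E"
  using twin_MDNS_legs_if_bound_unattained[of E'] twin_c_bound_unattained[OF assms] assms(2)
  by (auto simp: twin_extension_def)

end

theorem proposition9:
  fixes V :: "'a set" and E :: "'a \<Rightarrow> 'a \<Rightarrow> bool" and r :: nat
    and s c :: "nat \<Rightarrow> 'a" and H :: "'a set" and T_H :: "'a list" and x :: 'a
  assumes spider: "thin_spider V E r s c H"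
    and r2: "r \<ge> 2"
    and TH: "is_MDNS H E T_H"
    and fresh: "x \<notin> V"
  shows
   "(dns_num (insert x V) (add_false_twin E (s r) x) = dns_num V E + 1 \<and>
     dns_num V E + 1 = 2 * r + 1 + dns_num H E \<and>
     is_MDNS (insert x V) (add_false_twin E (s r) x)
        (T_H @ map c [1..<r+1] @ map s [1..<r+1] @ [x]))
  \<and> ((H = {} \<or> a_iso H E = 1) \<longrightarrow>
     dns_num (insert x V) (add_true_twin E (s r) x) = dns_num V E + 1 \<and>
     dns_num V E + 1 = 2 * r + 1 + dns_num H E \<and>
     is_MDNS (insert x V) (add_true_twin E (s r) x)
        (T_H @ [s r, x, c r] @ map c [1..<r] @ map s [1..<r]))
  \<and> ((H \<noteq> {} \<and> a_iso H E = 0) \<longrightarrow>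
     dns_num (insert x V) (add_true_twin E (s r) x) = 2 * r + dns_num H E \<and>
     is_MDNS (insert x V) (add_true_twin E (s r) x)
        (T_H @ map c [1..<r+1] @ map s [1..<r+1]))
  \<and> (H = {} \<longrightarrow>
     dns_num (insert x V) (add_false_twin E (c r) x) = dns_num (insert x V) (add_true_twin E (c r) x) \<and>
     dns_num (insert x V) (add_true_twin E (c r) x) = dns_num V E + 1 \<and>
     dns_num V E + 1 = 2 * r + 1 \<and>
     is_MDNS (insert x V) (add_false_twin E (c r) x)
        ([s r, c r, x] @ map c [1..<r] @ map s [1..<r]) \<and>
     is_MDNS (insert x V) (add_true_twin E (c r) x)
        ([s r, c r, x] @ map c [1..<r] @ map s [1..<r]))
  \<and> (H \<noteq> {} \<longrightarrow>
     dns_num (insert x V) (add_false_twin E (c r) x) = dns_num (insert x V) (add_true_twin E (c r) x) \<and>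
     dns_num (insert x V) (add_true_twin E (c r) x) = 2 * r + dns_num H E \<and>
     is_MDNS (insert x V) (add_false_twin E (c r) x)
        (T_H @ map c [1..<r+1] @ map s [1..<r+1]) \<and>
     is_MDNS (insert x V) (add_true_twin E (c r) x)
        (T_H @ map c [1..<r+1] @ map s [1..<r+1]))"
proof -
  interpret spider_twin V E r s c H T_H x
    using spider TH fresh by unfold_locales
  have Cf: "add_false_twin E (c r) x \<in> {add_false_twin E (c r) x, add_true_twin E (c r) x}"
    and Ct: "add_true_twin E (c r) x \<in> {add_false_twin E (c r) x, add_true_twin E (c r) x}"
    by simp_all
  have "H = {} \<Longrightarrow> dns_num H E = 0"
    using dns_num_H T_subset_H by simp
  then show ?thesis
    using MDNS_spider MDNS_false_twin_s MDNS_true_twin_s_isolated MDNS_true_twin_s_no_isolated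
      MDNS_twin_c_empty_H[OF _ Cf] MDNS_twin_c_empty_H[OF _ Ct]
      MDNS_twin_c_nonempty_H[OF _ Cf] MDNS_twin_c_nonempty_H[OF _ Ct]
    by (simp del: upt_Suc)
qed

end
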